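(* For every integer $i\ge 1$, the sequence $\{\sqrt[n]{d_i(i+n)}\}_{n\ge 1}$ is strictly log-convex; that is, for all integers $i\ge 1$ and $n\ge 1$, $$\frac{\sqrt[n+1]{d_i(i+n+1)}}{\sqrt[n]{d_i(i+n)}}<\frac{\sqrt[n+2]{d_i(i+n+2)}}{\sqrt[n+1]{d_i(i+n+1)}}.$$
   Context: For integers $m\ge 0$ and $0\le i\le m$, the Boros–Moll numbers are $$d_i(m)=2^{-2m}\sum_{k=i}^{m}2^k\binom{2m-2k}{m-k}\binom{m+k}{k}\binom{k}{i}.$$ *)

theory Defs
  imports Complex_Main
begin

definition boros_moll :: "nat \<Rightarrow> nat \<Rightarrow> real" where
  "boros_moll i m = (1 / 2 ^ (2 * m)) *
     (\<Sum>k = i..m. 2 ^ k * real ((2 * m - 2 * k) choose (m - k))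
                  * real ((m + k) choose k) * real (k choose i))"

end

theory Submission
  imports Defs
begin

text \<open>Write a(n) = d_i(i + n). It is a sum of hypergeometric terms, so creative telescoping yields
  a three-term recurrence c2 a(n+2) = c1 a(n+1) - c0 a(n), certified by an explicit rational
  function. The ratios r(n) = a(n+1) / a(n) then obey r(n+1) = (c1 - c0 / r(n)) / c2. An explicit
  rational lower bound for r(n) propagates through this recursion, and together with the recursion
  it forces r(n+1)^2 < r(n) r(n+2); both steps reduce to polynomials with nonnegative coefficients.
  Hence ln a(n) has strictly convex differences, and since a(0) \<ge> 1 the values
  ln a(n) / n = ln (root n (a n)) are strictly convex in n, which is the claim.\<close>

lemma convex_seq_sum_bound:
  fixes u :: "nat \<Rightarrow> real"
  assumes convex: "\<And>j. 2 * u (j+1) < u j + u (j+2)" and "n \<ge> 1"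
  shows "real n * (real n + 1) * (u n - u (n+1)) < 2 * (\<Sum>j<n. u j - u n)"
  using \<open>n \<ge> 1\<close>
proof (induction n rule: nat_induct_at_least)
  case base
  then show ?case using convex[of 0] by simp
next
  case (Suc n)
  have "real (Suc n) * (real (Suc n) + 1) * (u (Suc n) - u (Suc n + 1))
      = (real n + 1) * (real n + 2) * (u (n+1) - u (n+2))"
    by (simp add: algebra_simps)
  also have "\<dots> < (real n + 1) * (real n + 2) * (u n - u (n+1))"
    using convex[of n] by (intro mult_strict_left_mono) auto
  also have "\<dots> = real n * (real n + 1) * (u n - u (n+1)) + 2 * ((real n + 1) * (u n - u (n+1)))"
    by (simp add: algebra_simps)
  also have "\<dots> < 2 * ((\<Sum>j<n. u j - u n) + (real n + 1) * (u n - u (n+1)))"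
    using Suc.IH by simp
  also have "\<dots> = 2 * (\<Sum>j<Suc n. u j - u (Suc n))"
    by (simp add: sum_subtractf algebra_simps)
  finally show ?case .
qed

lemma quotient_by_index_strictly_convex:
  fixes f :: "nat \<Rightarrow> real"
  assumes "f 0 \<ge> 0"
    and diff_convex: "\<And>j. 2 * (f (j+2) - f (j+1)) < (f (j+1) - f j) + (f (j+3) - f (j+2))"
    and "n \<ge> 1"
  shows "f (n+1) / real (n+1) - f n / real n < f (n+2) / real (n+2) - f (n+1) / real (n+1)"
proof -
  define u where "u j = f (j+1) - f j" for j
  define N where "N = real n"
  have "real n * (real n + 1) * (u n - u (n+1)) < 2 * (\<Sum>j<n. u j - u n)"
    using diff_convex \<open>n \<ge> 1\<close> by (intro convex_seq_sum_bound) (simp_all add: u_def numeral_3_eq_3)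
  also have "(\<Sum>j<n. u j - u n) = f n - f 0 - real n * u n"
    using sum_lessThan_telescope[of f n] by (simp add: sum_subtractf u_def)
  finally have key: "0 < 2 * f n - 2 * N * u n - N * (N + 1) * (u n - u (n+1))"
    using \<open>f 0 \<ge> 0\<close> by (simp add: N_def algebra_simps)
  have f_Suc: "f (n+1) = f n + u n" "f (n+2) = f n + u n + u (n+1)"
    by (simp_all add: u_def)
  have "N \<ge> 1" using \<open>n \<ge> 1\<close> by (simp add: N_def)
  then have "(f n + u n) / (N+1) - f n / N - ((f n + u n + u (n+1)) / (N+2) - (f n + u n) / (N+1))
      = - (2 * f n - 2 * N * u n - N * (N + 1) * (u n - u (n+1))) / (N * (N+1) * (N+2))"
    by (simp add: divide_simps) algebra
  also have "\<dots> < 0"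
    using key \<open>N \<ge> 1\<close> by (simp add: divide_less_0_iff)
  finally have "(f n + u n) / (N+1) - f n / N < (f n + u n + u (n+1)) / (N+2) - (f n + u n) / (N+1)"
    by linarith
  then show ?thesis
    unfolding f_Suc N_def by (simp only: of_nat_add of_nat_1 of_nat_numeral)
qed

lemma root_seq_strictly_log_convex:
  fixes a :: "nat \<Rightarrow> real"
  assumes pos: "\<And>k. a k > 0" and "a 0 \<ge> 1"
    and ratio_log_convex: "\<And>k. (a (k+2) / a (k+1))^2 < a (k+1) / a k * (a (k+3) / a (k+2))"
    and "n \<ge> 1"
  shows "root (n+1) (a (n+1)) / root n (a n) < root (n+2) (a (n+2)) / root (n+1) (a (n+1))"
proof -
  define f where "f k = ln (a k)" for k
  have nz: "a k \<noteq> 0" for k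
    using pos[of k] by simp
  have "2 * (f (j+2) - f (j+1)) < (f (j+1) - f j) + (f (j+3) - f (j+2))" for j
  proof -
    have "ln ((a (j+2) / a (j+1))^2) < ln (a (j+1) / a j * (a (j+3) / a (j+2)))"
      using ratio_log_convex[of j] pos by (subst ln_less_cancel_iff) auto
    then show ?thesis
      using pos nz by (simp add: f_def ln_mult ln_div ln_realpow)
  qed
  then have "f (n+1) / real (n+1) - f n / real n < f (n+2) / real (n+2) - f (n+1) / real (n+1)"
    using \<open>a 0 \<ge> 1\<close> \<open>n \<ge> 1\<close> by (intro quotient_by_index_strictly_convex) (simp_all add: f_def)
  moreover have ln_quot: "ln (root (m+1) (a (m+1)) / root m (a m)) = f (m+1) / real (m+1) - f m / real m"
    if "m \<ge> 1" for m
    using that pos nz by (simp add: f_def ln_div ln_root)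
  ultimately have "ln (root (n+1) (a (n+1)) / root n (a n))
      < ln (root (n+2) (a (n+2)) / root (n+1) (a (n+1)))"
    using ln_quot[of "n+1"] \<open>n \<ge> 1\<close> by (simp add: numeral_2_eq_2)
  then show ?thesis
    using \<open>n \<ge> 1\<close> pos by (subst (asm) ln_less_cancel_iff) auto
qed


text \<open>\<open>bm_term i j l\<close> is the summand \<open>k = i + l\<close> of \<open>d\<^sub>i(i + l + j)\<close>.\<close>
definition bm_term :: "nat \<Rightarrow> nat \<Rightarrow> nat \<Rightarrow> real" where
  "bm_term i j l = 2^l * fact (2*j) * fact (2*i+2*l+j)
     / (fact j ^ 2 * fact (i+l+j) * fact i * fact l * 2^(i + 2*(l+j)))"

definition bm_seq :: "nat \<Rightarrow> nat \<Rightarrow> real" where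
  "bm_seq i n = (\<Sum>l\<le>n. bm_term i (n-l) l)"

definition bm_shift_j :: "real \<Rightarrow> real \<Rightarrow> real \<Rightarrow> real" where
  "bm_shift_j i j l = ((2*j+1)*(2*i+2*l+j+1)) / (2*(j+1)*(i+l+j+1))"

definition bm_shift_l :: "real \<Rightarrow> real \<Rightarrow> real \<Rightarrow> real" where
  "bm_shift_l i j l = ((2*i+2*l+j+1)*(2*i+2*l+j+2)) / (2*(i+l+j+1)*(l+1))"

lemma bm_term_pos: "bm_term i j l > 0"
  unfolding bm_term_def by (intro divide_pos_pos mult_pos_pos) auto

lemma bm_term_Suc_j: "bm_term i (Suc j) l = bm_term i j l * bm_shift_j i j l"
proof -
  have "2 * Suc j = Suc (Suc (2*j))" "2*i+2*l+Suc j = Suc (2*i+2*l+j)" "i+l+Suc j = Suc (i+l+j)"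
    "i + 2*(l + Suc j) = Suc (Suc (i+2*(l+j)))"
    by simp_all
  moreover have "(fact j :: real) \<noteq> 0" "(fact (i+l+j) :: real) \<noteq> 0" "(fact i :: real) \<noteq> 0"
    "(fact l :: real) \<noteq> 0"
    by simp_all
  ultimately show ?thesis
    unfolding bm_term_def bm_shift_j_def fact_Suc power_Suc
    by (simp only: of_nat_mult of_nat_Suc) (simp add: divide_simps, simp add: algebra_simps power2_eq_square)
qed

lemma bm_term_Suc_l: "bm_term i j (Suc l) = bm_term i j l * bm_shift_l i j l"
proof -
  have "2*i+2*Suc l+j = Suc (Suc (2*i+2*l+j))" "i+Suc l+j = Suc (i+l+j)"
    "i + 2*(Suc l + j) = Suc (Suc (i+2*(l+j)))"
    by simp_all
  moreover have "(fact j :: real) \<noteq> 0" "(fact (i+l+j) :: real) \<noteq> 0" "(fact i :: real) \<noteq> 0"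
    "(fact l :: real) \<noteq> 0"
    by simp_all
  ultimately show ?thesis
    unfolding bm_term_def bm_shift_l_def fact_Suc power_Suc
    by (simp only: of_nat_mult of_nat_Suc) (simp add: divide_simps algebra_simps power2_eq_square)
qed

lemma boros_moll_eq_bm_seq: "boros_moll i (i+n) = bm_seq i n"
proof -
  have "boros_moll i (i+n) = (1 / 2 ^ (2 * (i+n))) * (\<Sum>l = 0..n. 2 ^ (l+i)
      * real ((2 * (i+n) - 2 * (l+i)) choose ((i+n) - (l+i)))
      * real ((i+n) + (l+i) choose (l+i)) * real ((l+i) choose i))"
  proof -
    have "(\<Sum>k = i..i+n. g k) = (\<Sum>l = 0..n. g (l+i))" for g :: "nat \<Rightarrow> real"
      using sum.shift_bounds_cl_nat_ivl[of g 0 i n] by (simp add: add.commute)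
    then show ?thesis unfolding boros_moll_def by presburger
  qed
  also have "\<dots> = (\<Sum>l\<le>n. bm_term i (n-l) l)"
    unfolding sum_distrib_left atLeast0AtMost
  proof (rule sum.cong[OF refl])
    fix l assume "l \<in> {..n}"
    then obtain j where nj: "n = l + j" using le_iff_add by auto
    have e: "2 * (i+n) - 2 * (l+i) = 2*j" "(i+n) - (l+i) = j" "(i+n) + (l+i) = 2*i+2*l+j" "n - l = j"
      using nj by auto
    have b1: "real ((2*j) choose j) = fact (2*j) / (fact j * fact j)"
      by (simp add: binomial_fact mult_2)
    have b2: "real ((2*i+2*l+j) choose (l+i)) = fact (2*i+2*l+j) / (fact (l+i) * fact (i+l+j))"
      by (subst binomial_fact) (auto simp: algebra_simps)
    have b3: "real ((l+i) choose i) = fact (l+i) / (fact i * fact l)"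
      by (subst binomial_fact) auto
    have "(fact (l+i) :: real) \<noteq> 0" by simp
    moreover have "(2::real)^(i*2) = 2^i * 2^i" by (simp add: power_add[symmetric] mult_2_right)
    ultimately show "1 / 2 ^ (2 * (i + n)) * (2 ^ (l + i) * real (2 * (i + n) - 2 * (l + i) choose (i + n - (l + i))) *
          real (i + n + (l + i) choose (l + i)) * real (l + i choose i)) = bm_term i (n - l) l"
      unfolding e b1 b2 b3 bm_term_def using nj
      by (simp add: field_simps power_add power2_eq_square mult_2 add.commute add.left_commute)
  qed
  finally show ?thesis unfolding bm_seq_def .
qed

lemma bm_seq_pos: "bm_seq i n > 0"
  unfolding bm_seq_def by (rule sum_pos) (auto intro: bm_term_pos)

lemma fact_square_mult_power_two_le: "fact i * fact i * 2^i \<le> (fact (2*i) :: nat)"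
proof (induction i)
  case 0 then show ?case by simp
next
  case (Suc i)
  have "fact (Suc i) * fact (Suc i) * 2 ^ Suc i = (2 * Suc i * Suc i) * (fact i * fact i * 2^i :: nat)"
    by (simp add: algebra_simps)
  also have "\<dots> \<le> (2 * Suc i * Suc i) * fact (2*i)"
    using Suc by (intro mult_left_mono) auto
  also have "\<dots> \<le> (Suc (Suc (2*i)) * Suc (2*i)) * fact (2*i)"
    by (intro mult_right_mono) auto
  also have "\<dots> = fact (2 * Suc i)"
    by (simp add: algebra_simps)
  finally show ?case .
qed

lemma bm_seq_0_ge_1: "bm_seq i 0 \<ge> 1"
proof -
  have "bm_seq i 0 = fact (2*i) / (fact i * fact i * 2^i)"
    unfolding bm_seq_def bm_term_def by (simp add: power2_eq_square)
  moreover have "real (fact i * fact i * 2^i) \<le> real (fact (2*i))"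
    using fact_square_mult_power_two_le[of i] by linarith
  ultimately show ?thesis by (simp add: of_nat_fact)
qed

definition bm_c2 :: "real \<Rightarrow> real \<Rightarrow> real" where
  "bm_c2 i n = 4*(n+2)*(i+n+1)*(i+n+2)"

definition bm_c1 :: "real \<Rightarrow> real \<Rightarrow> real" where
  "bm_c1 i n = 2*(i+n+1)*(8*(i+n)^2+24*(i+n)+19-4*i^2)"

definition bm_c0 :: "real \<Rightarrow> real \<Rightarrow> real" where
  "bm_c0 i n = (2*i+n+1)*(4*(i+n)+3)*(4*(i+n)+5)"

text \<open>Zeilberger's certificate: \<open>bm_cert i n l\<close> telescopes the recurrence operator applied
  to the summands of \<open>bm_seq i\<close> (the terms with \<open>l > n\<close> being read as zero).\<close>
definition bm_cert_num :: "real \<Rightarrow> real \<Rightarrow> real \<Rightarrow> real" where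
  "bm_cert_num i n l = l * (64 + 384*n + 912*n^2 + 1104*n^3 + 720*n^4 + 240*n^5 + 32*n^6 + 208*i + 1080*i*n + 2088*i*n^2 + 1888*i*n^3 + 800*i*n^4 + 128*i*n^5 + 360*i^2 + 1504*i^2*n + 2096*i^2*n^2 + 1168*i^2*n^3 + 224*i^2*n^4 + 296*i^3 + 944*i^3*n + 800*i^3*n^2 + 192*i^3*n^3 + 80*i^4 + 192*i^4*n + 64*i^4*n^2
    + l * (-240 - 1064*n - 1816*n^2 - 1504*n^3 - 608*n^4 - 96*n^5 - 584*i - 2080*i*n - 2704*i*n^2 - 1536*i*n^3 - 320*i*n^4 - 840*i^2 - 2080*i^2*n - 1728*i^2*n^2 - 480*i^2*n^3 - 688*i^3 - 992*i^3*n - 384*i^3*n^2 - 192*i^4 - 128*i^4*n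
    + l * (288 + 912*n + 1056*n^2 + 528*n^3 + 96*n^4 + 432*i + 1136*i*n + 960*i*n^2 + 256*i*n^3 + 272*i^2 + 624*i^2*n + 288*i^2*n^2 + 192*i^3 + 192*i^3*n + 64*i^4
    + l * (-128 - 256*n - 160*n^2 - 32*n^3 - 192*i - 224*i*n - 64*i*n^2 - 64*i^2 - 32*i^2*n))))"

definition bm_cert_den :: "real \<Rightarrow> real \<Rightarrow> real \<Rightarrow> real" where
  "bm_cert_den i n l = (2*n+1-2*l)*(2*n+3-2*l)*(2*i+n+1+l)*(2*i+n+2+l)"

definition bm_cert :: "nat \<Rightarrow> nat \<Rightarrow> nat \<Rightarrow> real" where
  "bm_cert i n l = (if l \<le> n+2 then bm_cert_num i n l / bm_cert_den i n l * bm_term i (n+2-l) l else 0)"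

lemma bm_cert_den_nonzero: "bm_cert_den (real i) (real n) (real l) \<noteq> 0"
proof -
  have "real (2*n+1) \<noteq> real (2*l)" "real (2*n+3) \<noteq> real (2*l)"
    unfolding of_nat_eq_iff by presburger+
  then have "2 * real n + 1 - 2 * real l \<noteq> 0" "2 * real n + 3 - 2 * real l \<noteq> 0"
    by simp_all
  then show ?thesis
    unfolding bm_cert_den_def by (simp add: add_pos_nonneg)
qed

text \<open>The telescoping relation divided by its first summand, with the denominators cleared.\<close>
lemma frac_identity_two_shifts:
  fixes c2 c1 c0 an ad an' ad' bn' bd' p1 D1 p0 D0 :: real
  assumes "ad \<noteq> 0" "ad' \<noteq> 0" "bd' \<noteq> 0" "D1 \<noteq> 0" "D0 \<noteq> 0"
    and "c2*an*an'*bd'*D1*D0 - c1*an*ad'*bd'*D1*D0 + c0*ad*ad'*bd'*D1*D0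
      = p1*D0*an*bn'*ad' - p0*D1*an*an'*bd'"
  shows "c2*((an/ad)*(an'/ad')) - c1*(an/ad) + c0 = p1/D1*((an/ad)*(bn'/bd')) - p0/D0*((an/ad)*(an'/ad'))"
proof -
  have "c2*((an/ad)*(an'/ad')) - c1*(an/ad) + c0
      = (c2*an*an'*bd'*D1*D0 - c1*an*ad'*bd'*D1*D0 + c0*ad*ad'*bd'*D1*D0)/(ad*ad'*bd'*D1*D0)"
    using assms by (simp add: divide_simps) algebra
  also have "\<dots> = (p1*D0*an*bn'*ad' - p0*D1*an*an'*bd')/(ad*ad'*bd'*D1*D0)"
    using assms by simp
  also have "\<dots> = p1/D1*((an/ad)*(bn'/bd')) - p0/D0*((an/ad)*(an'/ad'))"
    using assms by (simp add: divide_simps)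
  finally show ?thesis .
qed

lemma frac_identity_one_shift:
  fixes c2 c1 an ad bn bd p2 D2 p1 D1 :: real
  assumes "ad \<noteq> 0" "bd \<noteq> 0" "D2 \<noteq> 0" "D1 \<noteq> 0"
    and "c2*an*bd*D2*D1 - c1*ad*bd*D2*D1 = p2*D1*bn*ad - p1*D2*an*bd"
  shows "c2*(an/ad) - c1 = p2/D2*(bn/bd) - p1/D1*(an/ad)"
proof -
  have "c2*(an/ad) - c1 = (c2*an*bd*D2*D1 - c1*ad*bd*D2*D1)/(ad*bd*D2*D1)"
    using assms by (simp add: divide_simps) algebra
  also have "\<dots> = (p2*D1*bn*ad - p1*D2*an*bd)/(ad*bd*D2*D1)"
    using assms by simp
  also have "\<dots> = p2/D2*(bn/bd) - p1/D1*(an/ad)"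
    using assms by (simp add: divide_simps)
  finally show ?thesis .
qed

lemma bm_cert_poly_identity:
  fixes i j l :: real
  shows "bm_c2 i (j+l)*((2*j+1)*(2*i+2*l+j+1))*((2*(j+1)+1)*(2*i+2*l+(j+1)+1))*(2*(i+l+(j+1)+1)*(l+1))
       *bm_cert_den i (j+l) (l+1)*bm_cert_den i (j+l) l
     - bm_c1 i (j+l)*((2*j+1)*(2*i+2*l+j+1))*(2*((j+1)+1)*(i+l+(j+1)+1))*(2*(i+l+(j+1)+1)*(l+1))
       *bm_cert_den i (j+l) (l+1)*bm_cert_den i (j+l) l
     + bm_c0 i (j+l)*(2*(j+1)*(i+l+j+1))*(2*((j+1)+1)*(i+l+(j+1)+1))*(2*(i+l+(j+1)+1)*(l+1))
       *bm_cert_den i (j+l) (l+1)*bm_cert_den i (j+l) l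
   = bm_cert_num i (j+l) (l+1)*bm_cert_den i (j+l) l*((2*j+1)*(2*i+2*l+j+1))
       *((2*i+2*l+(j+1)+1)*(2*i+2*l+(j+1)+2))*(2*((j+1)+1)*(i+l+(j+1)+1))
     - bm_cert_num i (j+l) l*bm_cert_den i (j+l) (l+1)*((2*j+1)*(2*i+2*l+j+1))
       *((2*(j+1)+1)*(2*i+2*l+(j+1)+1))*(2*(i+l+(j+1)+1)*(l+1))"
  unfolding bm_cert_num_def bm_cert_den_def bm_c2_def bm_c1_def bm_c0_def by algebra

lemma bm_cert_poly_identity_n1:
  fixes i n :: real
  shows "bm_c2 i n * ((2*0+1)*(2*i+2*(n+1)+0+1)) * (2*(i+(n+1)+0+1)*((n+1)+1))
       * bm_cert_den i n (n+2) * bm_cert_den i n (n+1)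
     - bm_c1 i n * (2*(0+1)*(i+(n+1)+0+1)) * (2*(i+(n+1)+0+1)*((n+1)+1))
       * bm_cert_den i n (n+2) * bm_cert_den i n (n+1)
   = bm_cert_num i n (n+2) * bm_cert_den i n (n+1) * ((2*i+2*(n+1)+0+1)*(2*i+2*(n+1)+0+2))
       * (2*(0+1)*(i+(n+1)+0+1))
     - bm_cert_num i n (n+1) * bm_cert_den i n (n+2) * ((2*0+1)*(2*i+2*(n+1)+0+1))
       * (2*(i+(n+1)+0+1)*((n+1)+1))"
  unfolding bm_cert_num_def bm_cert_den_def bm_c2_def bm_c1_def by algebra

lemma bm_cert_poly_identity_n2:
  fixes i n :: real
  shows "bm_c2 i n * bm_cert_den i n (n+2) = - bm_cert_num i n (n+2)"
  unfolding bm_cert_num_def bm_cert_den_def bm_c2_def by algebra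

lemma bm_telescoping:
  assumes "l \<le> n"
  shows "bm_c2 i n * bm_term i (n+2-l) l - bm_c1 i n * bm_term i (n+1-l) l + bm_c0 i n * bm_term i (n-l) l
    = bm_cert i n (l+1) - bm_cert i n l"
proof -
  obtain j where nj: "n = j + l" using assms le_iff_add by (metis add.commute)
  have e: "n+2-l = Suc (Suc j)" "n+1-l = Suc j" "n-l = j" "n+2-(l+1) = Suc j"
    using nj by auto
  have den: "bm_cert_den (real i) (real j + real l) (real l + 1) \<noteq> 0"
    "bm_cert_den (real i) (real j + real l) (real l) \<noteq> 0"
    using bm_cert_den_nonzero[of i "j+l" "l+1"] bm_cert_den_nonzero[of i "j+l" l]
    by (simp_all only: of_nat_add of_nat_1 not_False_eq_True)
  have cert: "bm_cert i n (l+1) = bm_cert_num i n (l+1) / bm_cert_den i n (l+1) * bm_term i (Suc j) (Suc l)"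
    "bm_cert i n l = bm_cert_num i n l / bm_cert_den i n l * bm_term i (Suc (Suc j)) l"
    unfolding bm_cert_def using nj e by simp_all
  define w where "w = bm_term i j l"
  have shifts: "bm_term i (Suc (Suc j)) l = w * (bm_shift_j i j l * bm_shift_j i (j+1) l)"
    "bm_term i (Suc j) l = w * bm_shift_j i j l"
    "bm_term i (Suc j) (Suc l) = w * (bm_shift_j i j l * bm_shift_l i (j+1) l)"
    unfolding w_def bm_term_Suc_j bm_term_Suc_l by (simp_all add: mult.assoc)
  have "bm_c2 i n * (bm_shift_j i j l * bm_shift_j i (j+1) l) - bm_c1 i n * bm_shift_j i j l + bm_c0 i n
     = bm_cert_num i n (l+1) / bm_cert_den i n (l+1) * (bm_shift_j i j l * bm_shift_l i (j+1) l)
       - bm_cert_num i n l / bm_cert_den i n l * (bm_shift_j i j l * bm_shift_j i (j+1) l)"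
    unfolding bm_shift_j_def bm_shift_l_def nj of_nat_add of_nat_1
    by (rule frac_identity_two_shifts[OF _ _ _ _ _ bm_cert_poly_identity])
      (use den in \<open>simp_all add: add_pos_nonneg\<close>)
  then have "w * (bm_c2 i n * (bm_shift_j i j l * bm_shift_j i (j+1) l) - bm_c1 i n * bm_shift_j i j l
      + bm_c0 i n)
    = w * (bm_cert_num i n (l+1) / bm_cert_den i n (l+1) * (bm_shift_j i j l * bm_shift_l i (j+1) l)
      - bm_cert_num i n l / bm_cert_den i n l * (bm_shift_j i j l * bm_shift_j i (j+1) l))"
    by simp
  then show ?thesis
    unfolding e cert shifts w_def[symmetric] by (simp add: algebra_simps)
qed


lemma bm_telescoping_penultimate:
  "bm_c2 i n * bm_term i 1 (n+1) - bm_c1 i n * bm_term i 0 (n+1) = bm_cert i n (n+2) - bm_cert i n (n+1)"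
proof -
  have cert: "bm_cert i n (n+2) = bm_cert_num i n (n+2) / bm_cert_den i n (n+2) * bm_term i 0 (Suc (n+1))"
    "bm_cert i n (n+1) = bm_cert_num i n (n+1) / bm_cert_den i n (n+1) * bm_term i 1 (n+1)"
    unfolding bm_cert_def by simp_all
  have den: "bm_cert_den (real i) (real n) (real n + 2) \<noteq> 0"
    "bm_cert_den (real i) (real n) (real n + 1) \<noteq> 0"
    using bm_cert_den_nonzero[of i n "n+2"] bm_cert_den_nonzero[of i n "n+1"]
    by (simp_all only: of_nat_add of_nat_1 of_nat_numeral not_False_eq_True)
  define w where "w = bm_term i 0 (n+1)"
  have shifts: "bm_term i 1 (n+1) = w * bm_shift_j i 0 (n+1)"
    "bm_term i 0 (Suc (n+1)) = w * bm_shift_l i 0 (n+1)"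
    unfolding w_def using bm_term_Suc_j[of i 0 "n+1"] bm_term_Suc_l[of i 0 "n+1"] by simp_all
  have "bm_c2 i n * bm_shift_j i 0 (n+1) - bm_c1 i n
    = bm_cert_num i n (n+2) / bm_cert_den i n (n+2) * bm_shift_l i 0 (n+1)
      - bm_cert_num i n (n+1) / bm_cert_den i n (n+1) * bm_shift_j i 0 (n+1)"
    unfolding bm_shift_j_def bm_shift_l_def of_nat_add of_nat_1 of_nat_0 of_nat_numeral
    by (rule frac_identity_one_shift[OF _ _ _ _ bm_cert_poly_identity_n1])
      (use den in \<open>simp_all add: add_pos_nonneg\<close>)
  then have "w * (bm_c2 i n * bm_shift_j i 0 (n+1) - bm_c1 i n)
    = w * (bm_cert_num i n (n+2) / bm_cert_den i n (n+2) * bm_shift_l i 0 (n+1)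
      - bm_cert_num i n (n+1) / bm_cert_den i n (n+1) * bm_shift_j i 0 (n+1))"
    by simp
  then show ?thesis
    unfolding cert shifts w_def[symmetric] by (simp add: algebra_simps)
qed

lemma bm_telescoping_last: "bm_c2 i n * bm_term i 0 (n+2) = bm_cert i n (n+3) - bm_cert i n (n+2)"
proof -
  have "bm_cert_den (real i) (real n) (real n + 2) \<noteq> 0"
    using bm_cert_den_nonzero[of i n "n+2"] by (simp only: of_nat_add of_nat_numeral not_False_eq_True)
  then have "bm_cert_num i n (real n + 2) / bm_cert_den i n (real n + 2) = - bm_c2 i n"
    using bm_cert_poly_identity_n2[of i n] by (simp add: divide_eq_eq)
  then show ?thesis
    unfolding bm_cert_def by (simp add: add.commute)
qed

lemma bm_seq_recurrence:
  "bm_c2 i n * bm_seq i (n+2) = bm_c1 i n * bm_seq i (n+1) - bm_c0 i n * bm_seq i n"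
proof -
  define F where "F l = bm_c2 i n * bm_term i (n+2-l) l
      - bm_c1 i n * (if l \<le> n+1 then bm_term i (n+1-l) l else 0)
      + bm_c0 i n * (if l \<le> n then bm_term i (n-l) l else 0)" for l
  have F_telescopes: "F l = bm_cert i n (Suc l) - bm_cert i n l" if "l < n+3" for l
  proof -
    have "l \<le> n \<or> l = n+1 \<or> l = n+2"
      using that by linarith
    then consider "l \<le> n" | "l = n+1" | "l = n+2"
      by blast
    then show ?thesis
    proof cases
      case 1
      then show ?thesis unfolding F_def using bm_telescoping[OF 1, of i] by simp
    next
      case 2
      then show ?thesis unfolding F_def using bm_telescoping_penultimate[of i n] by simp
    next
      case 3
      then show ?thesis unfolding F_def using bm_telescoping_last[of i n] by (simp add: numeral_3_eq_3)
    qed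
  qed
  have "bm_c2 i n * bm_seq i (n+2) - bm_c1 i n * bm_seq i (n+1) + bm_c0 i n * bm_seq i n
      = (\<Sum>l<n+3. F l)"
  proof -
    have "{..<n+3} = {..Suc (Suc n)}" by auto
    then show ?thesis
      unfolding F_def bm_seq_def sum.distrib sum_subtractf sum_distrib_left[symmetric]
      by (simp add: sum.atMost_Suc)
  qed
  also have "\<dots> = (\<Sum>l<n+3. bm_cert i n (Suc l) - bm_cert i n l)"
    using F_telescopes by (intro sum.cong) auto
  also have "\<dots> = bm_cert i n (n+3) - bm_cert i n 0"
    by (rule sum_lessThan_telescope)
  also have "\<dots> = 0"
    by (simp add: bm_cert_def bm_cert_num_def)
  finally show ?thesis by simp
qed


definition bm_ratio :: "nat \<Rightarrow> nat \<Rightarrow> real" where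
  "bm_ratio i n = bm_seq i (n+1) / bm_seq i n"

lemma bm_ratio_pos: "bm_ratio i n > 0"
  unfolding bm_ratio_def using bm_seq_pos by simp

lemma bm_c2_pos: "bm_c2 (real i) (real n) > 0"
  unfolding bm_c2_def by (simp add: add_pos_nonneg)

lemma bm_ratio_Suc: "bm_ratio i (n+1) = bm_c1 i n / bm_c2 i n - (bm_c0 i n / bm_c2 i n) / bm_ratio i n"
proof -
  have "bm_seq i (n+2) = (bm_c1 i n * bm_seq i (n+1) - bm_c0 i n * bm_seq i n) / bm_c2 i n"
    using bm_seq_recurrence[of i n] bm_c2_pos[of i n] by (simp add: field_simps)
  moreover have "bm_ratio i (n+1) = bm_seq i (n+2) / bm_seq i (n+1)"
    unfolding bm_ratio_def by (simp add: numeral_2_eq_2)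
  ultimately show ?thesis
    unfolding bm_ratio_def using bm_seq_pos[of i n] bm_seq_pos[of i "n+1"] bm_c2_pos[of i n]
    by (simp add: field_simps)
qed

definition bm_lb_num :: "real \<Rightarrow> real \<Rightarrow> real" where
  "bm_lb_num i n = 4*(n+i+1)*(n+i+i^2) - (n+i)"

definition bm_lb_den :: "real \<Rightarrow> real \<Rightarrow> real" where
  "bm_lb_den i n = 2*(n+1)*(n+i+i^2)"

lemma bm_lb_den_pos:
  assumes "i \<ge> 1" "n \<ge> 0"
  shows "bm_lb_den i n > 0"
  unfolding bm_lb_den_def using assms by (simp add: add_nonneg_pos add_pos_nonneg)

lemma bm_lb_num_pos:
  assumes "i \<ge> 1" "n \<ge> 0"
  shows "bm_lb_num i n > 0"
proof -
  have "4*(n+i+1) * 1 \<le> 4*(n+i+1)*(n+i+i^2)"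
    using assms by (intro mult_left_mono) (simp_all add: add_increasing2)
  from diff_right_mono[OF this[unfolded mult_1_right], of "n+i"]
  have "4*(n+i+1) - (n+i) \<le> bm_lb_num i n"
    unfolding bm_lb_num_def .
  moreover have "4*(n+i+1) - (n+i) > 0"
    using assms by simp
  ultimately show ?thesis by linarith
qed

text \<open>The two positivity certificates below are written in \<open>a = i - 1\<close>, so that all their
  coefficients are nonnegative.\<close>
definition lb_step_cert :: "real \<Rightarrow> real \<Rightarrow> real" where
  "lb_step_cert a n = 288 + a * (960 + a * (1208 + a * (704 + a * (184 + a * (16)))))
    + n * (672 + a * (2080 + a * (2380 + a * (1232 + a * (284 + a * (24)))))
    + n * (552 + a * (1536 + a * (1504 + a * (616 + a * (104 + a * (8)))))
    + n * (192 + a * (464 + a * (356 + a * (88 + a * (4))))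
    + n * (24 + a * (48 + a * (24))))))"

lemma lb_step_cert_nonneg:
  assumes "a \<ge> 0" "n \<ge> 0"
  shows "lb_step_cert a n \<ge> 0"
  unfolding lb_step_cert_def using assms by (intro add_nonneg_nonneg mult_nonneg_nonneg; simp)

lemma lb_step_cert_identity:
  fixes a n :: real
  shows "bm_c1 (a+1) n * bm_lb_num (a+1) n * bm_lb_den (a+1) (n+1)
      - bm_c0 (a+1) n * bm_lb_den (a+1) n * bm_lb_den (a+1) (n+1)
      - bm_lb_num (a+1) (n+1) * bm_c2 (a+1) n * bm_lb_num (a+1) n
    = lb_step_cert a n"
  unfolding lb_step_cert_def bm_c1_def bm_lb_num_def bm_lb_den_def bm_c0_def bm_c2_def by algebra

lemma bm_lb_step:
  fixes i n :: nat
  assumes "i \<ge> 1"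
  shows "bm_lb_num i (n+1) / bm_lb_den i (n+1)
    \<le> bm_c1 i n / bm_c2 i n - (bm_c0 i n / bm_c2 i n) / (bm_lb_num i n / bm_lb_den i n)"
proof -
  have i_pred: "real i - 1 + 1 = real i" "real i - 1 \<ge> 0"
    using assms by simp_all
  have pos: "bm_c2 i n > 0" "bm_lb_num i n > 0" "bm_lb_den i n > 0" "bm_lb_den i (n+1) > 0"
    using bm_c2_pos[of i n] assms
    by (simp_all add: bm_lb_num_pos bm_lb_den_pos add_nonneg_nonneg del: of_nat_add)
  have "bm_c1 i n / bm_c2 i n - (bm_c0 i n / bm_c2 i n) / (bm_lb_num i n / bm_lb_den i n)
        - bm_lb_num i (n+1) / bm_lb_den i (n+1)
      = lb_step_cert (real i - 1) n / (bm_c2 i n * bm_lb_num i n * bm_lb_den i (n+1))"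
    using pos lb_step_cert_identity[of "real i - 1" n, unfolded i_pred(1)]
    by (simp add: field_simps)
  also have "\<dots> \<ge> 0"
    using pos i_pred by (simp add: lb_step_cert_nonneg)
  finally show ?thesis by simp
qed

lemma bm_ratio_ge_lb:
  assumes "i \<ge> 1"
  shows "bm_lb_num i n / bm_lb_den i n \<le> bm_ratio i n"
proof (induction n)
  case 0
  have "bm_seq i 1 = bm_term i (Suc 0) 0 + bm_term i 0 (Suc 0)"
    unfolding bm_seq_def by (simp add: sum.atMost_Suc)
  then have "bm_ratio i 0 = bm_shift_j i 0 0 + bm_shift_l i 0 0"
    unfolding bm_ratio_def bm_term_Suc_j bm_term_Suc_l using bm_term_pos[of i 0 0]
    by (simp add: bm_seq_def field_simps)
  also have "\<dots> = bm_lb_num i 0 / bm_lb_den i 0"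
  proof -
    have "real i > 0"
      using assms by simp
    then have "real i + 1 > 0" "real i + real i^2 > 0"
      by (intro add_pos_pos; simp)+
    then have "real i + 1 \<noteq> 0" "real i + real i^2 \<noteq> 0"
      by simp_all
    then show ?thesis
      unfolding bm_shift_j_def bm_shift_l_def bm_lb_num_def bm_lb_den_def
      by (simp add: divide_simps) algebra
  qed
  finally show ?case by simp
next
  case (Suc n)
  have "bm_c0 i n / bm_c2 i n \<ge> 0"
    unfolding bm_c0_def using bm_c2_pos[of i n] by simp
  then have "(bm_c0 i n / bm_c2 i n) / bm_ratio i n \<le> (bm_c0 i n / bm_c2 i n) / (bm_lb_num i n / bm_lb_den i n)"
    using Suc assms bm_lb_num_pos[of i n] bm_lb_den_pos[of i n] bm_ratio_pos[of i n]
    by (intro divide_left_mono) auto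
  then show ?case
    using bm_lb_step[OF assms, of n] unfolding Suc_eq_plus1 bm_ratio_Suc by simp
qed

definition lc_cert :: "real \<Rightarrow> real \<Rightarrow> real \<Rightarrow> real" where
  "lc_cert a n t = 4589405568 + a * (56170838016 + a * (323239847616 + a * (1163239353408 + a * (2937075902616 + a * (5533211040144 + a * (8074385656008 + a * (9351454730960 + a * (8736546238736 + a * (6654903977840 + a * (4160386171624 + a * (2141321206096 + a * (907425437992 + a * (315648097440 + a * (89548177152 + a * (20500507584 + a * (3726594560 + a * (525006848 + a * (55219712 + a * (4077568 + a * (188416 + a * (4096)))))))))))))))))))))
    + n * (31604946336 + a * (364485274848 + a * (1971379637352 + a * (6650026959568 + a * (15693224829712 + a * (27543640644560 + a * (37311180092152 + a * (39950415814664 + a * (34344269195352 + a * (23941329812416 + a * (13608662819808 + a * (6319096234360 + a * (2392980607288 + a * (735067143808 + a * (181375424576 + a * (35397833344 + a * (5336213504 + a * (598860288 + a * (47068672 + a * (2310144 + a * (53248))))))))))))))))))))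
    + n * (101956361040 + a * (1103737848336 + a * (5587530795828 + a * (17587213798300 + a * (38597613219102 + a * (62769192448892 + a * (78460010349610 + a * (77155858108756 + a * (60585231478094 + a * (38328983045464 + a * (19620272416422 + a * (8127464173772 + a * (2713521439664 + a * (723878170832 + a * (152056753152 + a * (24579077376 + a * (2948284928 + a * (247002880 + a * (12892160 + a * (315392)))))))))))))))))))
    + n * (204537117600 + a * (2069738184672 + a * (9760789954338 + a * (28518177185288 + a * (57871675038630 + a * (86652506929724 + a * (99249025129050 + a * (88939433902352 + a * (63231677278414 + a * (35940918748284 + a * (16374991765336 + a * (5967060828120 + a * (1726474088288 + a * (391298432768 + a * (67950640832 + a * (8724600192 + a * (780006144 + a * (43333120 + a * (1125888))))))))))))))))))
    + n * (285623025120 + a * (2688829569792 + a * (11749247449299 + a * (31673306167155 + a * (59035579328972 + a * (80784532049908 + a * (84083150345395 + a * (68023676047323 + a * (43321738545064 + a * (21851144338150 + a * (8731714788726 + a * (2749313726568 + a * (673904094280 + a * (125920785360 + a * (17323689024 + a * (1653769792 + a * (97819648 + a * (2699520)))))))))))))))))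
    + n * (294416763786 + a * (2564570648370 + a * (10318976799411 + a * (25486451406586 + a * (43288426592804 + a * (53657209655742 + a * (50244526814073 + a * (36279023323700 + a * (20424860484956 + a * (9000312486706 + a * (3095259235654 + a * (822349115504 + a * (165521091816 + a * (24407013504 + a * (2487124608 + a * (156516352 + a * (4583168))))))))))))))))
    + n * (231747988965 + a * (1856350711191 + a * (6827944477644 + a * (15322052356457 + a * (23490313019690 + a * (26090964130802 + a * (21709966421776 + a * (13791968573858 + a * (6749486698912 + a * (2546122932699 + a * (734771735210 + a * (159388827860 + a * (25170291744 + a * (2732993552 + a * (182519808 + a * (5653760)))))))))))))))
    + n * (142107582101 + a * (1039272902774 + a * (3464101725895 + a * (6991396746258 + a * (9562344074086 + a * (9389779250780 + a * (6834907700198 + a * (3750504994804 + a * (1560414576871 + a * (490259015994 + a * (114587338678 + a * (19333931648 + a * (2227671696 + a * (156998656 + a * (5109504))))))))))))))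
    + n * (68610320294 + a * (454246989480 + a * (1357638302448 + a * (2433485657002 + a * (2925789757381 + a * (2496352771536 + a * (1557370252771 + a * (720134962701 + a * (247059848156 + a * (62162648905 + a * (11158055552 + a * (1354002784 + a * (99627008 + a * (3359488)))))))))))))
    + n * (26170344004 + a * (155274060068 + a * (410646930214 + a * (643243944416 + a * (666850517078 + a * (483100163266 + a * (251167744011 + a * (94522338712 + a * (25569916239 + a * (4850061568 + a * (612161824 + a * (46133248 + a * (1568000))))))))))))
    + n * (7860757025 + a * (41282132297 + a * (94964789185 + a * (127233667090 + a * (110780945995 + a * (65970564814 + a * (27444007680 + a * (7973464536 + a * (1583001888 + a * (203829200 + a * (15220736 + a * (493312)))))))))))
    + n * (1839900781 + a * (8421047300 + a * (16462863758 + a * (18305852608 + a * (12885405358 + a * (6006714624 + a * (1874378584 + a * (384399488 + a * (49006160 + a * (3423744 + a * (93952))))))))))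
    + n * (329001092 + a * (1286302616 + a * (2066492100 + a * (1822218896 + a * (976154552 + a * (328034528 + a * (68192128 + a * (8196736 + a * (480256 + a * (8192)))))))))
    + n * (43450640 + a * (141256224 + a * (176779024 + a * (114468736 + a * (41782688 + a * (8541952 + a * (882560 + a * (32768)))))))
    + n * (3997248 + a * (10398592 + a * (9174976 + a * (3725056 + a * (706432 + a * (49152)))))
    + n * (228864 + a * (449024 + a * (216320 + a * (32768)))
    + n * (6144 + a * (8192)))))))))))))))))
    + t * (2213513568 + a * (22009335984 + a * (101929357944 + a * (292147986276 + a * (580758614964 + a * (850373979216 + a * (950610875536 + a * (829643878696 + a * (573162083936 + a * (315850962036 + a * (139201330276 + a * (48962959184 + a * (13648991920 + a * (2976179264 + a * (496848640 + a * (61341696 + a * (5282048 + a * (283648 + a * (7168))))))))))))))))))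
    + n * (14000320368 + a * (130152696192 + a * (562183168764 + a * (1498754473236 + a * (2762692412196 + a * (3737854510352 + a * (3845190176712 + a * (3073559008436 + a * (1933879756568 + a * (964159973072 + a * (381386292536 + a * (119248342240 + a * (29201507360 + a * (5511590848 + a * (781666048 + a * (80010496 + a * (5527552 + a * (227328 + a * (4096))))))))))))))))))
    + n * (41230841616 + a * (356503583016 + a * (1428243378606 + a * (3520553255961 + a * (5978992058341 + a * (7422690485052 + a * (6973336171136 + a * (5062073227061 + a * (2873491458237 + a * (1282288247722 + a * (449679929460 + a * (123205026024 + a * (26061575568 + a * (4174740064 + a * (491751744 + a * (40747904 + a * (2217728 + a * (70656 + a * (1024))))))))))))))))))
    + n * (74994051384 + a * (599501367048 + a * (2213311470021 + a * (5009408073132 + a * (7779293963872 + a * (8788857437262 + a * (7472030762845 + a * (4876105742704 + a * (2468604820330 + a * (973081940606 + a * (297912341904 + a * (70234973304 + a * (12557263808 + a * (1662984480 + a * (157605760 + a * (10158208 + a * (408576 + a * (8192)))))))))))))))))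
    + n * (94208885406 + a * (691418456187 + a * (2334653524131 + a * (4812056411448 + a * (6771959037490 + a * (6893733555136 + a * (5245424740712 + a * (3039017644326 + a * (1352653965990 + a * (463184748512 + a * (121367769660 + a * (24037019632 + a * (3526071264 + a * (371709632 + a * (26911040 + a * (1234944 + a * (28672))))))))))))))))
    + n * (86571106635 + a * (578516229186 + a * (1770554560806 + a * (3290694303042 + a * (4151036266866 + a * (3761419010442 + a * (2526513533364 + a * (1279221065494 + a * (491464778004 + a * (143031441308 + a * (31232880896 + a * (5025399024 + a * (578993344 + a * (45691648 + a * (2279424 + a * (57344)))))))))))))))
    + n * (60108294234 + a * (362111938302 + a * (993545912382 + a * (1644985941226 + a * (1834934997190 + a * (1457482609745 + a * (849120412023 + a * (368077257053 + a * (119107112339 + a * (28590530924 + a * (5008930740 + a * (622642112 + a * (52445504 + a * (2752512 + a * (71680))))))))))))))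
    + n * (32104748796 + a * (172232819688 + a * (417915258758 + a * (607033273398 + a * (588463714781 + a * (401617464938 + a * (198250785065 + a * (71544513810 + a * (18840128948 + a * (3570022600 + a * (473191360 + a * (41751424 + a * (2236416 + a * (57344)))))))))))))
    + n * (13296635556 + a * (62544721303 + a * (131886696255 + a * (164748912341 + a * (135634197479 + a * (77407867893 + a * (31335162943 + a * (9040852644 + a * (1839212172 + a * (256403136 + a * (23190848 + a * (1222656 + a * (28672))))))))))))
    + n * (4269073581 + a * (17253491542 + a * (30891117447 + a * (32299484724 + a * (21868458669 + a * (10036249160 + a * (3172257404 + a * (686409920 + a * (98767552 + a * (8875520 + a * (436224 + a * (8192)))))))))))
    + n * (1053513072 + a * (3558305992 + a * (5236525958 + a * (4407637400 + a * (2338831024 + a * (811674520 + a * (184515000 + a * (26635456 + a * (2256320 + a * (93184 + a * (1024))))))))))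
    + n * (196161348 + a * (531879320 + a * (612801720 + a * (390547168 + a * (149874440 + a * (35176320 + a * (4861120 + a * (350976 + a * (9216))))))))
    + n * (26663220 + a * (54453488 + a * (45288288 + a * (19558784 + a * (4611072 + a * (557696 + a * (26496))))))
    + n * (2496144 + a * (3416576 + a * (1741952 + a * (389632 + a * (32896))))
    + n * (143808 + a * (99072 + a * (18432))
    + n * (3840)))))))))))))))
    + t * (401957856 + a * (3098485584 + a * (10965531240 + a * (23639269932 + a * (34724602152 + a * (36824691996 + a * (29131121310 + a * (17508611364 + a * (8062675158 + a * (2845512264 + a * (763681968 + a * (153161712 + a * (22244448 + a * (2212608 + a * (135168 + a * (3840)))))))))))))))
    + n * (2320713360 + a * (16593617424 + a * (54336029388 + a * (108055592208 + a * (145887913602 + a * (141571138026 + a * (101937106836 + a * (55406433606 + a * (22892555214 + a * (7178833680 + a * (1691202528 + a * (293153568 + a * (36065376 + a * (2958336 + a * (143616 + a * (3072)))))))))))))))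
    + n * (6197397840 + a * (40833372480 + a * (122859951138 + a * (223719437493 + a * (275397287253 + a * (242403703560 + a * (157309780104 + a * (76461097632 + a * (27977454264 + a * (7675202280 + a * (1557244512 + a * (227764464 + a * (22998912 + a * (1489152 + a * (53760 + a * (768)))))))))))))))
    + n * (10145656536 + a * (61127577396 + a * (167629293585 + a * (277067467410 + a * (308027981868 + a * (243335812164 + a * (140634033534 + a * (60287103768 + a * (19216896276 + a * (4519673184 + a * (769516656 + a * (91648128 + a * (7196352 + a * (333312 + a * (6912))))))))))))))
    + n * (11374514790 + a * (62101687335 + a * (153725085369 + a * (228239088447 + a * (226544121528 + a * (158562504477 + a * (80410179978 + a * (29872948614 + a * (8118856032 + a * (1592411520 + a * (219001440 + a * (20029536 + a * (1098240 + a * (27648)))))))))))))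
    + n * (9237694341 + a * (45208527210 + a * (99846725013 + a * (131482676724 + a * (114878439381 + a * (70097343936 + a * (30605645238 + a * (9628816656 + a * (2166314400 + a * (340264128 + a * (35530464 + a * (2230272 + a * (64512))))))))))))
    + n * (5604112734 + a * (24258173457 + a * (47120489763 + a * (54169209873 + a * (40920686433 + a * (21318212841 + a * (7814092452 + a * (2016249456 + a * (359517216 + a * (42350832 + a * (2987520 + a * (96768)))))))))))
    + n * (2579724903 + a * (9712731732 + a * (16294448829 + a * (16023324486 + a * (10222383363 + a * (4420369776 + a * (1312773120 + a * (264834912 + a * (34860048 + a * (2721792 + a * (96768))))))))))
    + n * (905426169 + a * (2901307026 + a * (4104891474 + a * (3360291171 + a * (1752785952 + a * (604148424 + a * (137696256 + a * (20051184 + a * (1700352 + a * (64512)))))))))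
    + n * (241108170 + a * (638466618 + a * (737368101 + a * (483559584 + a * (196596216 + a * (50667360 + a * (8064912 + a * (721920 + a * (27648))))))))
    + n * (47951811 + a * (100590402 + a * (90411348 + a * (44781720 + a * (13108416 + a * (2244096 + a * (202752 + a * (6912)))))))
    + n * (6906906 + a * (10742400 + a * (6958104 + a * (2345856 + a * (420096 + a * (35328 + a * (768))))))
    + n * (681192 + a * (696864 + a * (280896 + a * (50304 + a * (3072))))
    + n * (41184 + a * (20736 + a * (3456))
    + n * (1152))))))))))))))
    + t * (32281824 + a * (178107456 + a * (441243096 + a * (649566516 + a * (633165608 + a * (430618451 + a * (209535215 + a * (73497492 + a * (18445548 + a * (3231984 + a * (375952 + a * (26176 + a * (832))))))))))))
    + n * (168263104 + a * (854032144 + a * (1940300996 + a * (2607819816 + a * (2307272929 + a * (1413758020 + a * (613965828 + a * (189890896 + a * (41359088 + a * (6156224 + a * (590592 + a * (32512 + a * (768))))))))))))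
    + n * (402186928 + a * (1862701656 + a * (3847441202 + a * (4676091339 + a * (3714322777 + a * (2024196680 + a * (772324632 + a * (206477806 + a * (38015256 + a * (4631928 + a * (346160 + a * (13632 + a * (192))))))))))))
    + n * (583585088 + a * (2442774612 + a * (4540024151 + a * (4932290860 + a * (3470381852 + a * (1654940352 + a * (543504542 + a * (122233638 + a * (18305176 + a * (1719176 + a * (89664 + a * (1920)))))))))))
    + n * (573436478 + a * (2144569426 + a * (3541775084 + a * (3390816125 + a * (2077770723 + a * (848843633 + a * (233330567 + a * (42431436 + a * (4858884 + a * (314176 + a * (8640))))))))))
    + n * (402863160 + a * (1327408814 + a * (1918033879 + a * (1589338968 + a * (829618053 + a * (282092232 + a * (62318052 + a * (8602656 + a * (671552 + a * (22528)))))))))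
    + n * (208151550 + a * (593779335 + a * (735999871 + a * (515595094 + a * (222473522 + a * (60381872 + a * (10049872 + a * (937216 + a * (37504))))))))
    + n * (80070601 + a * (193348930 + a * (200304330 + a * (114882314 + a * (39231456 + a * (7953976 + a * (885760 + a * (41856)))))))
    + n * (22927828 + a * (45471523 + a * (37975643 + a * (17018292 + a * (4293172 + a * (575808 + a * (32064))))))
    + n * (4825835 + a * (7530040 + a * (4803868 + a * (1560896 + a * (256320 + a * (16896)))))
    + n * (725556 + a * (833208 + a * (371048 + a * (75968 + a * (5952))))
    + n * (73768 + a * (55296 + a * (14272 + a * (1280)))
    + n * (4544 + a * (1664 + a * (128))
    + n * (128)))))))))))))
    + t * (956448 + a * (3211632 + a * (4707096 + a * (3944740 + a * (2079040 + a * (713348 + a * (159184 + a * (22304 + a * (1792 + a * (64)))))))))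
    + n * (4412880 + a * (13530048 + a * (17945108 + a * (13459164 + a * (6259772 + a * (1860748 + a * (350840 + a * (40096 + a * (2496 + a * (64)))))))))
    + n * (9202896 + a * (25510216 + a * (30244242 + a * (19986245 + a * (8036244 + a * (2012181 + a * (307740 + a * (26888 + a * (1152 + a * (16)))))))))
    + n * (11448648 + a * (28341928 + a * (29570715 + a * (16868034 + a * (5701291 + a * (1154414 + a * (134250 + a * (7968 + a * (176))))))))
    + n * (9437994 + a * (20543431 + a * (18480800 + a * (8848313 + a * (2413622 + a * (370523 + a * (29120 + a * (880)))))))
    + n * (5412537 + a * (10149230 + a * (7654803 + a * (2953564 + a * (609641 + a * (63072 + a * (2512))))))
    + n * (2202936 + a * (3460334 + a * (2100984 + a * (612566 + a * (85056 + a * (4448)))))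
    + n * (636198 + a * (803798 + a * (368396 + a * (72160 + a * (5056))))
    + n * (127734 + a * (121719 + a * (37440 + a * (3696)))
    + n * (16977 + a * (10848 + a * (1680))
    + n * (1344 + a * (432)
    + n * (48)))))))))))))))"

lemma lc_cert_pos:
  assumes "a \<ge> 0" "n \<ge> 0" "t \<ge> 0"
  shows "lc_cert a n t > 0"
  unfolding lc_cert_def using assms by (intro add_pos_nonneg add_nonneg_nonneg mult_nonneg_nonneg; simp)

lemma lc_cert_identity:
  fixes a n t :: real
  shows "(bm_lb_num (a+1) n + t)^4 * (bm_c1 (a+1) (n+1) * bm_c1 (a+1) n - bm_c0 (a+1) (n+1) * bm_c2 (a+1) n)
        * bm_c2 (a+1) n^2
      - (bm_lb_num (a+1) n + t)^3 * bm_lb_den (a+1) n * bm_c1 (a+1) (n+1) * bm_c0 (a+1) n * bm_c2 (a+1) n^2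
      - (bm_c1 (a+1) n * (bm_lb_num (a+1) n + t) - bm_c0 (a+1) n * bm_lb_den (a+1) n)^3
        * bm_c2 (a+1) (n+1) * bm_lb_den (a+1) n
    = 64 * (a+1+n+2) * lc_cert a n t"
  unfolding lc_cert_def bm_c1_def bm_lb_num_def bm_lb_den_def bm_c0_def bm_c2_def by algebra

text \<open>Substituting \<open>y = (c\<^sub>1 x - c\<^sub>0) / (c\<^sub>2 x)\<close> into
  \<open>c\<^sub>2' y (x z - y\<^sup>2) = c\<^sub>1' x y - c\<^sub>0' x - c\<^sub>2' y\<^sup>3\<close> and clearing the factor \<open>(c\<^sub>2 x)\<^sup>3\<close>
  gives the polynomial in the last assumption.\<close>
lemma sq_lt_mult_of_recurrence:
  fixes c2 c1 c0 c2' c1' c0' x y z :: real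
  assumes "c2 > 0" "c2' > 0" "x > 0" "y > 0"
    and y: "y = c1/c2 - (c0/c2)/x" and z: "z = c1'/c2' - (c0'/c2')/y"
    and pos: "0 < x^4 * (c1'*c1 - c0'*c2) * c2^2 - x^3 * c1' * c0 * c2^2 - (c1*x - c0)^3 * c2'"
  shows "y^2 < x * z"
proof -
  have "c1 * x = c2 * x * y + c0"
    using y assms by (simp add: field_simps)
  then have "x^4 * (c1'*c1 - c0'*c2) * c2^2 - x^3 * c1' * c0 * c2^2 - (c1*x - c0)^3 * c2'
      = (x^3 * c2^3) * (c1' * x * y - c0' * x - c2' * y^3)"
    by algebra
  with pos have "0 < (x^3 * c2^3) * (c1' * x * y - c0' * x - c2' * y^3)"
    by simp
  moreover have "x^3 * c2^3 > 0"
    using assms by simp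
  ultimately have "0 < c1' * x * y - c0' * x - c2' * y^3"
    by (rule zero_less_mult_pos)
  moreover have "x * z - y^2 = (c1' * x * y - c0' * x - c2' * y^3) / (c2' * y)"
    unfolding z using \<open>c2' > 0\<close> \<open>y > 0\<close> by (simp add: field_simps power2_eq_square power3_eq_cube)
  ultimately have "x * z - y^2 > 0"
    using \<open>c2' > 0\<close> \<open>y > 0\<close> by simp
  then show ?thesis by simp
qed

lemma bm_ratio_log_convex:
  assumes "i \<ge> 1"
  shows "bm_ratio i (n+1)^2 < bm_ratio i n * bm_ratio i (n+2)"
proof -
  define d where "d = bm_lb_den i n"
  define x where "x = bm_ratio i n"
  define t where "t = d * x - bm_lb_num i n"
  have i_pred: "real i - 1 + 1 = real i" "real i - 1 \<ge> 0"
    using assms by simp_all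
  have "d > 0" "x > 0"
    using assms bm_lb_den_pos[of i n] bm_ratio_pos[of i n] by (simp_all add: d_def x_def)
  have "t \<ge> 0"
    using bm_ratio_ge_lb[OF assms, of n] \<open>d > 0\<close> by (simp add: t_def d_def x_def field_simps)
  then have "0 < 64 * (real i - 1 + 1 + real n + 2) * lc_cert (real i - 1) (real n) t"
    using i_pred by (intro mult_pos_pos lc_cert_pos) simp_all
  moreover have "bm_lb_num i n + t = d * x"
    by (simp add: t_def)
  ultimately have "0 < (d * x)^4 * (bm_c1 i (n+1) * bm_c1 i n - bm_c0 i (n+1) * bm_c2 i n) * bm_c2 i n^2
      - (d * x)^3 * d * bm_c1 i (n+1) * bm_c0 i n * bm_c2 i n^2
      - (bm_c1 i n * (d * x) - bm_c0 i n * d)^3 * bm_c2 i (n+1) * d"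
    unfolding i_pred(1) lc_cert_identity[of "real i - 1" "real n" t, unfolded i_pred(1), symmetric] d_def[symmetric]
    by (simp only: of_nat_add of_nat_1)
  also have "\<dots> = d^4 * (x^4 * (bm_c1 i (n+1) * bm_c1 i n - bm_c0 i (n+1) * bm_c2 i n) * bm_c2 i n^2
      - x^3 * bm_c1 i (n+1) * bm_c0 i n * bm_c2 i n^2 - (bm_c1 i n * x - bm_c0 i n)^3 * bm_c2 i (n+1))"
    by algebra
  finally have "0 < x^4 * (bm_c1 i (n+1) * bm_c1 i n - bm_c0 i (n+1) * bm_c2 i n) * bm_c2 i n^2
      - x^3 * bm_c1 i (n+1) * bm_c0 i n * bm_c2 i n^2 - (bm_c1 i n * x - bm_c0 i n)^3 * bm_c2 i (n+1)"
    using \<open>d > 0\<close> by (simp add: zero_less_mult_iff)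
  from this[unfolded x_def] show ?thesis
    by (rule sq_lt_mult_of_recurrence[OF bm_c2_pos bm_c2_pos bm_ratio_pos bm_ratio_pos
          bm_ratio_Suc bm_ratio_Suc[of i "n+1", unfolded add.assoc one_add_one]])
qed

theorem theorem5p2:
  fixes i n :: nat
  assumes "i \<ge> 1" and "n \<ge> 1"
  shows "root (n + 1) (boros_moll i (i + n + 1)) / root n (boros_moll i (i + n))
       < root (n + 2) (boros_moll i (i + n + 2)) / root (n + 1) (boros_moll i (i + n + 1))"
proof -
  have "root (n+1) (bm_seq i (n+1)) / root n (bm_seq i n)
      < root (n+2) (bm_seq i (n+2)) / root (n+1) (bm_seq i (n+1))"
  proof (rule root_seq_strictly_log_convex)
    show "(bm_seq i (k+2) / bm_seq i (k+1))^2 < bm_seq i (k+1) / bm_seq i k * (bm_seq i (k+3) / bm_seq i (k+2))"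
      for k
      using bm_ratio_log_convex[OF assms(1), of k] by (simp add: bm_ratio_def numeral_2_eq_2 numeral_3_eq_3)
  qed (use assms bm_seq_pos bm_seq_0_ge_1 in auto)
  then show ?thesis
    unfolding add.assoc boros_moll_eq_bm_seq .
qed

end
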